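(* Let $G$ be a dense $K_4^3\cup e$-free $3$-graph with $\lambda(G)>\frac{\sqrt3}{18}$. Then $G$ is $X_4$-free.
   Context: $K_4^3\cup e$ is the $3$-graph on $\{1,\dots,7\}$ with edges $\{123,124,134,234,567\}$. For a $3$-graph $G$ on $[n]$, $\lambda(G)=\max\{\sum_{e\in E(G)}\prod_{i\in e}x_i:\sum_ix_i=1,x_i\ge0\}$. An $r$-graph $G$ is dense if $\lambda(G')<\lambda(G)$ for every proper subgraph $G'$ of $G$. $X_i$ is the $3$-graph on $[2i+2]$ in which $\{1,2,2j+1,2j+2\}$ spans a $K_4^3$ for each $1\le j\le i$, and no other edges. *)

theory Defs
  imports Complex_Main
begin

definition hypergraph3 :: "'a set \<Rightarrow> 'a set set \<Rightarrow> bool" where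
  "hypergraph3 V E \<longleftrightarrow> finite V \<and> (\<forall>e\<in>E. e \<subseteq> V \<and> card e = 3)"

text \<open>Lagrangian: maximum of the edge polynomial over the standard simplex on V
  (the value 0 is added so that the graph with no vertices has Lagrangian 0;
  for nonempty V this does not change the supremum since all values are nonnegative).\<close>
definition lagrangian :: "'a set \<Rightarrow> 'a set set \<Rightarrow> real" where
  "lagrangian V E = Sup (insert 0 {(\<Sum>e\<in>E. \<Prod>i\<in>e. x i) | x.
      (\<forall>i\<in>V. 0 \<le> x i) \<and> (\<Sum>i\<in>V. x i) = 1})"

definition subgraph3 :: "'a set \<Rightarrow> 'a set set \<Rightarrow> 'a set \<Rightarrow> 'a set set \<Rightarrow> bool" where
  "subgraph3 V' E' V E \<longleftrightarrow> V' \<subseteq> V \<and> E' \<subseteq> E \<and> hypergraph3 V' E'"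

definition dense3 :: "'a set \<Rightarrow> 'a set set \<Rightarrow> bool" where
  "dense3 V E \<longleftrightarrow> (\<forall>V' E'. subgraph3 V' E' V E \<and> (V', E') \<noteq> (V, E)
      \<longrightarrow> lagrangian V' E' < lagrangian V E)"

definition contains3 :: "'a set \<Rightarrow> 'a set set \<Rightarrow> 'b set \<Rightarrow> 'b set set \<Rightarrow> bool" where
  "contains3 V E FV FE \<longleftrightarrow> (\<exists>\<phi>. inj_on \<phi> FV \<and> \<phi> ` FV \<subseteq> V \<and> (\<forall>e\<in>FE. \<phi> ` e \<in> E))"

definition free3 :: "'a set \<Rightarrow> 'a set set \<Rightarrow> 'b set \<Rightarrow> 'b set set \<Rightarrow> bool" where
  "free3 V E FV FE \<longleftrightarrow> \<not> contains3 V E FV FE"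

definition K43e_V :: "nat set" where "K43e_V = {1..7}"
definition K43e_E :: "nat set set" where
  "K43e_E = {{1,2,3},{1,2,4},{1,3,4},{2,3,4},{5,6,7}}"

definition X_V :: "nat \<Rightarrow> nat set" where "X_V i = {1..2*i+2}"
definition X_E :: "nat \<Rightarrow> nat set set" where
  "X_E i = (\<Union>j\<in>{1..i}. {e. e \<subseteq> {1, 2, 2*j+1, 2*j+2} \<and> card e = 3})"

end

theory Submission
  imports Defs
begin

text \<open>If G contains a copy of X_4 with centres a and b, then every edge of G meets {a, b}:
  an edge avoiding both centres misses one of the four pairs, and that pair together with
  a and b spans a K_4^3 disjoint from it, a copy of K_4^3 \<union> e. With every edge meeting {a, b}
  and the remaining weight s outside a and b, the edge polynomial is at most
  x_a x_b s + (x_a + x_b) s^2/2 \<le> (s - s^3)/4 \<le> \<surd>3/18.\<close>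

lemma sum_prod_one_point_extensions_le:
  fixes x :: "'a \<Rightarrow> real"
  assumes "finite S" and "finite R"
    and P: "\<And>p. p \<in> P \<Longrightarrow> \<exists>v\<in>R. v \<notin> S \<and> p = insert v S"
    and "\<forall>i\<in>R. 0 \<le> x i" and "0 \<le> prod x S"
  shows "(\<Sum>p\<in>P. prod x p) \<le> prod x S * sum x R"
proof -
  define g where "g p = the_elem (p - S)" for p
  have g: "g p \<in> R \<and> g p \<notin> S \<and> p = insert (g p) S" if p: "p \<in> P" for p
  proof -
    obtain v where v: "v \<in> R" "v \<notin> S" "p = insert v S" using P[OF p] by blast
    then have "p - S = {v}" by auto
    with v show ?thesis by (simp add: g_def)
  qed
  have inj: "inj_on g P" by (rule inj_onI) (metis g)
  have "(\<Sum>p\<in>P. prod x p) = (\<Sum>p\<in>P. prod x S * x (g p))"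
    using g \<open>finite S\<close> by (intro sum.cong) (auto, metis mult.commute prod.insert)
  also have "\<dots> = prod x S * sum x (g ` P)"
    by (simp add: sum_distrib_left sum.reindex[OF inj])
  also have "\<dots> \<le> prod x S * sum x R"
    using g assms by (intro mult_left_mono sum_mono2) auto
  finally show ?thesis .
qed

lemma sum_prod_pairs_le:
  fixes x :: "'a \<Rightarrow> real"
  assumes "finite R" and "\<forall>i\<in>R. 0 \<le> x i" and "\<forall>p\<in>P. p \<subseteq> R \<and> card p = 2"
  shows "(\<Sum>p\<in>P. prod x p) \<le> (sum x R)^2 / 2"
  using assms
proof (induction R arbitrary: P rule: finite_induct)
  case empty
  then have "P = {}" by force
  then show ?case by simp
next
  case (insert w R)
  let ?P1 = "P \<inter> {p. w \<in> p}" and ?P0 = "P - {p. w \<in> p}"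
  have "finite P"
    using insert.prems(2) insert.hyps(1) by (metis Pow_iff finite_Pow_iff finite_insert finite_subset subsetI)
  then have split: "(\<Sum>p\<in>P. prod x p) = (\<Sum>p\<in>?P1. prod x p) + (\<Sum>p\<in>?P0. prod x p)"
    by (rule sum.Int_Diff)
  have "(\<Sum>p\<in>?P0. prod x p) \<le> (sum x R)^2 / 2"
    using insert.prems by (intro insert.IH) auto
  moreover have "(\<Sum>p\<in>?P1. prod x p) \<le> prod x {w} * sum x R"
  proof (rule sum_prod_one_point_extensions_le)
    fix p assume "p \<in> ?P1"
    then have "w \<in> p" "p \<subseteq> insert w R" "card p = 2" using insert.prems(2) by auto
    then obtain v where "p = {w, v}" "v \<noteq> w"
      by (metis card_2_iff insert_commute insertE singletonD)
    then show "\<exists>v\<in>R. v \<notin> {w} \<and> p = insert v {w}"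
      using \<open>p \<subseteq> insert w R\<close> by auto
  qed (use insert in auto)
  moreover have "x w * sum x R + (sum x R)^2 / 2 \<le> (x w + sum x R)^2 / 2"
    by (simp add: power2_eq_square algebra_simps)
  ultimately show ?case
    using split insert.hyps by simp
qed

lemma sum_prod_link_le:
  fixes x :: "'a \<Rightarrow> real"
  assumes "finite F" and "finite R"
    and F: "\<forall>e\<in>F. a \<in> e \<and> card e = 3 \<and> e - {a} \<subseteq> R"
    and "\<forall>i\<in>R. 0 \<le> x i" and "0 \<le> x a"
  shows "(\<Sum>e\<in>F. prod x e) \<le> x a * (sum x R)^2 / 2"
proof -
  have inj: "inj_on (\<lambda>e. e - {a}) F"
    by (rule inj_onI) (metis F insert_Diff)
  have "(\<Sum>e\<in>F. prod x e) = (\<Sum>e\<in>F. x a * prod x (e - {a}))"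
    using F by (intro sum.cong) (auto simp: prod.remove card_ge_0_finite)
  also have "\<dots> = x a * (\<Sum>p\<in>(\<lambda>e. e - {a}) ` F. prod x p)"
    by (simp add: sum_distrib_left sum.reindex[OF inj])
  also have "\<dots> \<le> x a * ((sum x R)^2 / 2)"
    using F assms(2,4,5)
    by (intro mult_left_mono sum_prod_pairs_le) (auto simp: card_Diff_singleton)
  finally show ?thesis by simp
qed

lemma cubic_le_max:
  fixes s :: real
  assumes "0 \<le> s"
  shows "s - s^3 \<le> 2 * sqrt 3 / 9"
proof -
  have r2: "sqrt 3 * sqrt 3 = 3" by simp
  have "2 * sqrt 3 / 9 - s + s^3 = (s - sqrt 3 / 3)^2 * (s + 2 * sqrt 3 / 3)"
    by (simp add: power2_eq_square power3_eq_cube field_simps r2)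
  moreover have "0 \<le> (s - sqrt 3 / 3)^2 * (s + 2 * sqrt 3 / 3)"
    using assms by simp
  ultimately show ?thesis by linarith
qed

lemma edge_polynomial_le_if_edges_meet_pair:
  fixes x :: "'a \<Rightarrow> real"
  assumes "finite V" and E: "\<forall>e\<in>E. e \<subseteq> V \<and> card e = 3"
    and ab: "a \<in> V" "b \<in> V" "a \<noteq> b"
    and meet: "\<forall>e\<in>E. a \<in> e \<or> b \<in> e"
    and nonneg: "\<forall>i\<in>V. 0 \<le> x i" and "sum x V = 1"
  shows "(\<Sum>e\<in>E. prod x e) \<le> sqrt 3 / 18"
proof -
  define R where "R = V - {a, b}"
  define s where "s = sum x R"
  have "finite R" and nonneg_R: "\<forall>i\<in>R. 0 \<le> x i"
    using assms(1) nonneg by (auto simp: R_def)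
  have "0 \<le> s" and "0 \<le> x a" and "0 \<le> x b"
    using nonneg_R nonneg ab by (auto simp: s_def sum_nonneg)
  have "V = insert a (insert b R)" using ab by (auto simp: R_def)
  then have "sum x V = sum x (insert a (insert b R))" by simp
  also have "\<dots> = x a + x b + s"
    using \<open>finite R\<close> ab by (simp add: R_def s_def)
  finally have "sum x V = x a + x b + s" .
  with \<open>sum x V = 1\<close> have total: "x a + x b = 1 - s" by simp
  have "finite E"
    using E assms(1) by (metis Pow_iff finite_Pow_iff finite_subset subsetI)
  define E_ab where "E_ab = {e\<in>E. a \<in> e \<and> b \<in> e}"
  define E_a where "E_a = {e\<in>E. a \<in> e \<and> b \<notin> e}"
  define E_b where "E_b = {e\<in>E. b \<in> e \<and> a \<notin> e}"
  have cover: "E_ab \<union> E_a \<union> E_b = E"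
    using meet by (auto simp: E_ab_def E_a_def E_b_def)
  have "finite E_ab" "finite E_a" "finite E_b"
    using \<open>finite E\<close> by (auto simp: E_ab_def E_a_def E_b_def)
  moreover have "E_ab \<inter> E_a = {}" "E_ab \<inter> E_b = {}" "E_a \<inter> E_b = {}"
    by (auto simp: E_ab_def E_a_def E_b_def)
  ultimately have "(\<Sum>e\<in>E_ab \<union> E_a \<union> E_b. prod x e)
      = (\<Sum>e\<in>E_ab. prod x e) + (\<Sum>e\<in>E_a. prod x e) + (\<Sum>e\<in>E_b. prod x e)"
    by (simp add: sum.union_disjoint Int_Un_distrib2)
  then have split: "(\<Sum>e\<in>E. prod x e)
      = (\<Sum>e\<in>E_ab. prod x e) + (\<Sum>e\<in>E_a. prod x e) + (\<Sum>e\<in>E_b. prod x e)"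
    by (simp only: cover)
  have "(\<Sum>e\<in>E_ab. prod x e) \<le> prod x {a, b} * s"
    unfolding s_def
  proof (rule sum_prod_one_point_extensions_le)
    fix e assume "e \<in> E_ab"
    then have "{a, b} \<subseteq> e" "e \<subseteq> V" "card e = 3" using E by (auto simp: E_ab_def)
    then have "card (e - {a, b}) = 1"
      using ab by (simp add: card_Diff_subset card_ge_0_finite)
    then obtain v where "e - {a, b} = {v}" by (rule card_1_singletonE)
    then show "\<exists>v\<in>R. v \<notin> {a, b} \<and> e = insert v {a, b}"
      using \<open>{a, b} \<subseteq> e\<close> \<open>e \<subseteq> V\<close> by (auto simp: R_def)
  qed (use \<open>finite R\<close> nonneg_R \<open>0 \<le> x a\<close> \<open>0 \<le> x b\<close> ab in auto)
  moreover have "(\<Sum>e\<in>E_a. prod x e) \<le> x a * s^2 / 2"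
    unfolding s_def using \<open>finite E\<close> E
    by (intro sum_prod_link_le \<open>finite R\<close> nonneg_R \<open>0 \<le> x a\<close>) (auto simp: E_a_def R_def)
  moreover have "(\<Sum>e\<in>E_b. prod x e) \<le> x b * s^2 / 2"
    unfolding s_def using \<open>finite E\<close> E
    by (intro sum_prod_link_le \<open>finite R\<close> nonneg_R \<open>0 \<le> x b\<close>) (auto simp: E_b_def R_def)
  ultimately have "(\<Sum>e\<in>E. prod x e) \<le> x a * x b * s + (x a + x b) * s^2 / 2"
    using split ab by (simp add: algebra_simps add_divide_distrib)
  also have "\<dots> \<le> (1 - s)^2 / 4 * s + (1 - s) * s^2 / 2"
  proof -
    have "x a * x b \<le> (x a + x b)^2 / 4"
      using zero_le_power2[of "x a - x b"] by (simp add: power2_eq_square algebra_simps)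
    then have "x a * x b \<le> (1 - s)^2 / 4" using total by simp
    then have "x a * x b * s \<le> (1 - s)^2 / 4 * s"
      using \<open>0 \<le> s\<close> by (rule mult_right_mono)
    then show ?thesis using total by simp
  qed
  also have "\<dots> = (s - s^3) / 4"
    by (simp add: power2_eq_square power3_eq_cube field_simps)
  also have "\<dots> \<le> sqrt 3 / 18"
    using cubic_le_max[OF \<open>0 \<le> s\<close>] by simp
  finally show ?thesis .
qed

lemma lagrangian_le_if_edges_meet_pair:
  assumes "hypergraph3 V E" and "a \<in> V" "b \<in> V" "a \<noteq> b"
    and "\<forall>e\<in>E. a \<in> e \<or> b \<in> e"
  shows "lagrangian V E \<le> sqrt 3 / 18"
  unfolding lagrangian_def
  using assms edge_polynomial_le_if_edges_meet_pair[of V E a b]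
  by (intro cSup_least) (auto simp: hypergraph3_def)

lemma contains_K43e:
  assumes "{a, b, c} \<in> E" "{a, b, d} \<in> E" "{a, c, d} \<in> E" "{b, c, d} \<in> E"
    and "distinct [a, b, c, d]"
    and "e \<in> E" "card e = 3" "e \<inter> {a, b, c, d} = {}"
    and "{a, b, c, d} \<subseteq> V" "e \<subseteq> V"
  shows "contains3 V E K43e_V K43e_E"
proof -
  obtain p q r where e: "e = {p, q, r}" "p \<noteq> q" "q \<noteq> r" "p \<noteq> r"
    using \<open>card e = 3\<close> card_3_iff by metis
  define \<psi> where "\<psi> n = (if n = 1 then a else if n = 2 then b else if n = 3 then c
      else if n = 4 then d else if n = 5 then p else if n = 6 then q else r)" for n :: nat
  have V7: "K43e_V = {1, 2, 3, 4, 5, 6, 7}" by (auto simp: K43e_V_def)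
  have "inj_on \<psi> K43e_V"
    unfolding V7 inj_on_def using assms e by (auto simp: \<psi>_def)
  moreover have "\<psi> ` K43e_V \<subseteq> V"
    unfolding V7 using assms e by (auto simp: \<psi>_def)
  moreover have "\<forall>f\<in>K43e_E. \<psi> ` f \<in> E"
    unfolding K43e_E_def using assms e by (auto simp: \<psi>_def insert_commute)
  ultimately show ?thesis unfolding contains3_def by blast
qed

lemma edges_meet_centres_of_X4:
  assumes "hypergraph3 V E" and "free3 V E K43e_V K43e_E"
    and "contains3 V E (X_V 4) (X_E 4)"
  obtains a b where "a \<in> V" "b \<in> V" "a \<noteq> b" "\<forall>e\<in>E. a \<in> e \<or> b \<in> e"
proof -
  have E: "\<forall>e\<in>E. e \<subseteq> V \<and> card e = 3" and "finite V"
    using assms(1) by (auto simp: hypergraph3_def)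
  obtain \<phi> where inj: "inj_on \<phi> {1..10::nat}" and img: "\<phi> ` {1..10} \<subseteq> V"
    and ed: "\<forall>e\<in>X_E 4. \<phi> ` e \<in> E"
    using assms(3) by (auto simp: contains3_def X_V_def)
  have inV: "\<phi> i \<in> V" if "1 \<le> i" "i \<le> 10" for i using img that by auto
  have \<phi>_eq: "\<phi> i = \<phi> j \<longleftrightarrow> i = j" if "1 \<le> i" "i \<le> 10" "1 \<le> j" "j \<le> 10" for i j
    using inj that by (auto simp: inj_on_eq_iff)
  have edge: "\<phi> ` {u, v, w} \<in> E"
    if "{u, v, w} \<subseteq> {1, 2, 2*j+1, 2*j+2}" "card {u, v, w} = 3" "1 \<le> j" "j \<le> 4" for u v w j
  proof -
    have "{u, v, w} \<in> X_E 4" using that unfolding X_E_def by auto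
    with ed show ?thesis by blast
  qed
  have "\<forall>e\<in>E. \<phi> 1 \<in> e \<or> \<phi> 2 \<in> e"
  proof (rule ballI, rule ccontr)
    fix e assume "e \<in> E" and avoid: "\<not> (\<phi> 1 \<in> e \<or> \<phi> 2 \<in> e)"
    have hit: "e \<inter> {\<phi> (2*j+1), \<phi> (2*j+2)} \<noteq> {}" if j: "1 \<le> j" "j \<le> 4" for j
    proof
      assume disjoint: "e \<inter> {\<phi> (2*j+1), \<phi> (2*j+2)} = {}"
      have "contains3 V E K43e_V K43e_E"
      proof (rule contains_K43e)
        show "{\<phi> 1, \<phi> 2, \<phi> (2*j+1)} \<in> E" using edge[of 1 2 "2*j+1" j] j by auto
        show "{\<phi> 1, \<phi> 2, \<phi> (2*j+2)} \<in> E" using edge[of 1 2 "2*j+2" j] j by auto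
        show "{\<phi> 1, \<phi> (2*j+1), \<phi> (2*j+2)} \<in> E" using edge[of 1 "2*j+1" "2*j+2" j] j by auto
        show "{\<phi> 2, \<phi> (2*j+1), \<phi> (2*j+2)} \<in> E" using edge[of 2 "2*j+1" "2*j+2" j] j by auto
        show "distinct [\<phi> 1, \<phi> 2, \<phi> (2*j+1), \<phi> (2*j+2)]" using j \<phi>_eq by auto
        show "e \<inter> {\<phi> 1, \<phi> 2, \<phi> (2*j+1), \<phi> (2*j+2)} = {}" using disjoint avoid by auto
        show "{\<phi> 1, \<phi> 2, \<phi> (2*j+1), \<phi> (2*j+2)} \<subseteq> V" using j inV by auto
      qed (use \<open>e \<in> E\<close> E in auto)
      with assms(2) show False by (simp add: free3_def)
    qed
    define g where "g j = (SOME v. v \<in> e \<inter> {\<phi> (2*j+1), \<phi> (2*j+2)})" for j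
    have g: "g j \<in> e \<inter> {\<phi> (2*j+1), \<phi> (2*j+2)}" if "1 \<le> j" "j \<le> 4" for j
      unfolding g_def using hit[OF that] by (metis ex_in_conv someI_ex)
    have "inj_on g {1..4}"
    proof (rule inj_onI)
      fix i j assume i: "i \<in> {1..(4::nat)}" and j: "j \<in> {1..(4::nat)}" and "g i = g j"
      moreover have "g i \<in> {\<phi> (2*i+1), \<phi> (2*i+2)}" "g j \<in> {\<phi> (2*j+1), \<phi> (2*j+2)}"
        using g i j by auto
      ultimately show "i = j" using \<phi>_eq by auto
    qed
    moreover have "g ` {1..4} \<subseteq> e" using g by auto
    moreover have "finite e" using \<open>e \<in> E\<close> E \<open>finite V\<close> finite_subset by blast
    ultimately have "card {1..(4::nat)} \<le> card e" by (metis card_inj_on_le)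
    then show False using \<open>e \<in> E\<close> E by simp
  qed
  moreover have "\<phi> 1 \<in> V" "\<phi> 2 \<in> V" "\<phi> 1 \<noteq> \<phi> 2" using inV \<phi>_eq by auto
  ultimately show ?thesis using that by blast
qed

theorem lemma5p10:
  fixes V :: "'a set" and E :: "'a set set"
  assumes "hypergraph3 V E"
    and "dense3 V E"
    and "free3 V E K43e_V K43e_E"
    and "lagrangian V E > sqrt 3 / 18"
  shows "free3 V E (X_V 4) (X_E 4)"
  unfolding free3_def
proof
  assume "contains3 V E (X_V 4) (X_E 4)"
  with assms(1,3) obtain a b where "a \<in> V" "b \<in> V" "a \<noteq> b" "\<forall>e\<in>E. a \<in> e \<or> b \<in> e"
    by (rule edges_meet_centres_of_X4)
  with assms(1) have "lagrangian V E \<le> sqrt 3 / 18"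
    by (rule lagrangian_le_if_edges_meet_pair)
  with assms(4) show False by simp
qed

end
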